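(* There exists a $2$-adic fractal string $\mathcal{CS}_2\subseteq\mathbb{Z}_2$ of Minkowski--Bouligand dimension $D=0$ and with oscillatory period $\mathbf{p}=\frac{2\pi}{\log 2}$; that is, its geometric zeta function extends meromorphically to $\mathbb{C}$, its set of poles (complex dimensions) is exactly $\{\frac{2\pi i n}{\log 2}: n\in\mathbb{Z}\}$, and $0$ is the abscissa of convergence of the series defining the geometric zeta function.
   Context: Let $\mathbb{Z}_2$ be the ring of $2$-adic integers with $|2|_2=\frac12$. A $2$-adic fractal string $\mathcal{L}$ in $\mathbb{Z}_2$ is a countable disjoint union of balls $a+2^n\mathbb{Z}_2$ ($a\in\mathbb{Z}_2$, $n\ge1$) contained in $\mathbb{Z}_2$; such a ball has length $2^{-n}$, and $\mathcal{L}$ is encoded by its sequence of lengths $l_j$ counted with multiplicity. Its geometric zeta function is $\zeta_{\mathcal{L}}(s)=\sum_j l_j^s$ for $\Re(s)$ large, meromorphically continued to $\mathbb{C}$ when possible; the complex dimensions are the poles of this continuation; the Minkowski--Bouligand dimension $D$ is the abscissa of convergence of $\sum_j l_j^s$; the oscillatory period is $\mathbf{p}>0$ if the set of complex dimensions is exactly $\{D+in\mathbf{p}:n\in\mathbb{Z}\}$. *)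

theory Defs
  imports "HOL-Complex_Analysis.Complex_Analysis"
begin

text \<open>2-adic integers represented by their binary digit expansions:
  x = sum_k x_k 2^k.  The ball a + 2^n Z_2 is the set of 2-adic integers
  whose first n digits agree with those of a.\<close>

type_synonym Z2 = "nat \<Rightarrow> bool"

definition ball2 :: "Z2 \<Rightarrow> nat \<Rightarrow> Z2 set" where
  "ball2 a n = {x. \<forall>k<n. x k = a k}"

definition padic_fractal_string :: "nat set \<Rightarrow> (nat \<Rightarrow> Z2) \<Rightarrow> (nat \<Rightarrow> nat) \<Rightarrow> bool" where
  "padic_fractal_string J a n \<longleftrightarrow>
     (\<forall>j\<in>J. n j \<ge> 1) \<and>
     (\<forall>i\<in>J. \<forall>j\<in>J. i \<noteq> j \<longrightarrow> ball2 (a i) (n i) \<inter> ball2 (a j) (n j) = {})"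

definition ball_length :: "nat \<Rightarrow> real" where
  "ball_length n = (1/2) ^ n"

definition abscissa_of_convergence :: "nat set \<Rightarrow> (nat \<Rightarrow> real) \<Rightarrow> real \<Rightarrow> bool" where
  "abscissa_of_convergence J l D \<longleftrightarrow>
     (\<forall>\<sigma>>D. (\<lambda>j. l j powr \<sigma>) summable_on J) \<and>
     (\<forall>\<sigma><D. \<not> ((\<lambda>j. l j powr \<sigma>) summable_on J))"

end

theory Submission
  imports Defs
begin

text \<open>The string consists of the balls 2^j + 2^(j+1) Z_2 for j \<ge> 0, whose digit sequences are
  0...01 (j zeros); they partition Z_2 - {0}.  The ball of index j has length 2^-(j+1), so
  the series of lengths is geometric: for real \<sigma> it converges exactly when 2^-\<sigma> < 1, and for
  Re s > 0 it sums to 1 / (2^s - 1).  This is an inverse of an entire function, hence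
  meromorphic on C, with poles exactly at the zeros of 2^s - 1, i.e. at s = 2 \<pi> i k / log 2.\<close>

lemma ball2_disjoint:
  assumes "k < n" "k < m" "a k \<noteq> b k"
  shows "ball2 a n \<inter> ball2 b m = {}"
  using assms unfolding ball2_def by auto

lemma padic_fractal_string_unit_digits: "padic_fractal_string UNIV (\<lambda>j k. k = j) Suc"
  unfolding padic_fractal_string_def
proof (intro conjI ballI impI)
  fix i j :: nat
  assume "i \<noteq> j"
  then show "ball2 (\<lambda>k. k = i) (Suc i) \<inter> ball2 (\<lambda>k. k = j) (Suc j) = {}"
    by (intro ball2_disjoint[where k = "min i j"]) auto
qed simp

lemma power_powr_real:
  fixes x :: real
  assumes "x > 0"
  shows "(x ^ n) powr y = (x powr y) ^ n"
proof -
  have "(x ^ n) powr y = (x powr real n) powr y"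
    using assms by (simp add: powr_realpow)
  also have "\<dots> = (x powr y) powr real n"
    by (rule powr_powr_swap)
  also have "\<dots> = (x powr y) ^ n"
    using assms by (intro powr_realpow) simp
  finally show ?thesis .
qed

lemma summable_on_geometric_Suc_iff:
  fixes x :: real
  assumes "x \<ge> 0"
  shows "(\<lambda>j. x ^ Suc j) summable_on UNIV \<longleftrightarrow> x < 1"
proof -
  have "(\<lambda>j. x ^ Suc j) summable_on UNIV \<longleftrightarrow> summable (\<lambda>j. x ^ Suc j)"
    using assms by (intro summable_on_UNIV_nonneg_real_iff) simp
  also have "\<dots> \<longleftrightarrow> summable (\<lambda>j. x ^ j)"
    by (rule summable_Suc_iff)
  finally show ?thesis
    using assms by simp
qed

lemma summable_on_geometric_powr_iff:
  fixes q \<sigma> :: real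
  assumes "0 < q" "q < 1"
  shows "(\<lambda>j. (q ^ Suc j) powr \<sigma>) summable_on UNIV \<longleftrightarrow> \<sigma> > 0"
proof -
  have "(\<lambda>j. (q ^ Suc j) powr \<sigma>) = (\<lambda>j. (q powr \<sigma>) ^ Suc j)"
    using assms(1) by (intro ext power_powr_real)
  then show ?thesis
    using summable_on_geometric_Suc_iff[of "q powr \<sigma>"] powr01_less_one[OF assms] by simp
qed

lemma abscissa_of_convergence_ball_length_Suc:
  "abscissa_of_convergence UNIV (\<lambda>j. ball_length (Suc j)) 0"
  using summable_on_geometric_powr_iff[of "1/2"]
  unfolding abscissa_of_convergence_def ball_length_def by simp

lemma has_sum_geometric_Suc:
  fixes z :: "'a :: {real_normed_field, banach}"
  assumes "norm z < 1"
  shows "((\<lambda>n. z ^ Suc n) has_sum (z / (1 - z))) UNIV"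
proof -
  have "range Suc = {1..}"
    by (auto simp: image_iff dest: Suc_le_D)
  with has_sum_geometric_from_1[OF assms] have "((\<lambda>n. z ^ n) has_sum (z / (1 - z))) (range Suc)"
    by simp
  then show ?thesis
    by (simp add: has_sum_reindex comp_def)
qed

lemma of_real_ball_length_powr:
  "complex_of_real (ball_length n) powr s = exp (- (s * of_real (ln 2))) ^ n"
proof -
  have pos: "ball_length n > 0"
    by (simp add: ball_length_def)
  have "ln (ball_length n) = - (real n * ln 2)"
    unfolding ball_length_def by (simp add: ln_realpow ln_div)
  then have "complex_of_real (ball_length n) powr s = exp (of_nat n * - (s * of_real (ln 2)))"
    using pos by (simp add: powr_def Ln_of_real algebra_simps)
  also have "\<dots> = exp (- (s * of_real (ln 2))) ^ n"
    by (rule exp_of_nat_mult)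
  finally show ?thesis .
qed

lemma has_sum_ball_length_Suc_powr:
  assumes "Re s > 0"
  shows "((\<lambda>j. complex_of_real (ball_length (Suc j)) powr s)
            has_sum inverse (exp (s * of_real (ln 2)) - 1)) UNIV"
proof -
  define z where "z = exp (- (s * of_real (ln 2)))"
  have "norm z < 1"
    using assms by (simp add: z_def)
  then have "((\<lambda>j. z ^ Suc j) has_sum (z / (1 - z))) UNIV"
    by (rule has_sum_geometric_Suc)
  moreover have "z / (1 - z) = inverse (exp (s * of_real (ln 2)) - 1)"
    unfolding z_def by (simp add: exp_minus field_simps)
  ultimately show ?thesis
    by (simp only: of_real_ball_length_powr z_def)
qed

lemma exp_mult_eq_1_iff:
  assumes "L \<noteq> 0"
  shows "exp (z * L) = 1 \<longleftrightarrow> (\<exists>k::int. z = 2 * pi * \<i> * of_int k / L)"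
proof -
  have "exp w = 1 \<longleftrightarrow> (\<exists>k::int. w = 2 * pi * \<i> * of_int k)" for w
    unfolding exp_eq_1 by (auto simp: complex_eq_iff)
  then have "exp (z * L) = 1 \<longleftrightarrow> (\<exists>k::int. z * L = 2 * pi * \<i> * of_int k)" .
  also have "\<dots> \<longleftrightarrow> (\<exists>k::int. z = 2 * pi * \<i> * of_int k / L)"
    by (simp only: eq_divide_eq assms not_False_eq_True if_True)
  finally show ?thesis .
qed

lemma is_pole_inverse_entire_iff:
  fixes f :: "complex \<Rightarrow> complex"
  assumes "f analytic_on UNIV" "f w \<noteq> 0"
  shows "is_pole (\<lambda>z. inverse (f z)) z \<longleftrightarrow> f z = 0"
proof -
  have "f analytic_on {z}"
    using assms(1) analytic_on_subset by blast
  moreover have "eventually (\<lambda>u. f u \<noteq> 0) (at z)"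
    using non_zero_neighbour_alt[of f UNIV z w] assms analytic_imp_holomorphic
    by (auto elim: eventually_mono)
  ultimately show ?thesis
    by (simp add: is_pole_inverse_iff isolated_zero_analytic_iff)
qed

lemma is_pole_inverse_exp_mult_minus_1_iff:
  assumes "L \<noteq> 0"
  shows "is_pole (\<lambda>s. inverse (exp (s * L) - 1)) z \<longleftrightarrow>
           (\<exists>k::int. z = 2 * pi * \<i> * of_int k / L)"
proof -
  have "(\<lambda>s. exp (s * L) - 1) analytic_on UNIV"
    by (intro analytic_intros)
  moreover have "exp (1 / L * L) - 1 \<noteq> 0"
    using assms by (simp add: exp_eq_1)
  ultimately have "is_pole (\<lambda>s. inverse (exp (s * L) - 1)) z \<longleftrightarrow> exp (z * L) - 1 = 0"
    by (rule is_pole_inverse_entire_iff)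
  also have "\<dots> \<longleftrightarrow> (\<exists>k::int. z = 2 * pi * \<i> * of_int k / L)"
    unfolding right_minus_eq using assms by (rule exp_mult_eq_1_iff)
  finally show ?thesis .
qed

theorem lemma4p1:
  shows "\<exists>(J::nat set) (a::nat \<Rightarrow> Z2) (n::nat \<Rightarrow> nat).
    padic_fractal_string J a n \<and>
    abscissa_of_convergence J (\<lambda>j. ball_length (n j)) 0 \<and>
    (\<exists>\<zeta>::complex \<Rightarrow> complex.
       \<zeta> meromorphic_on UNIV \<and>
       (\<forall>s. Re s > 0 \<longrightarrow>
          ((\<lambda>j. complex_of_real (ball_length (n j)) powr s) has_sum \<zeta> s) J) \<and>
       {z. is_pole \<zeta> z} = {2 * pi * \<i> * of_int k / complex_of_real (ln 2) | k. k \<in> (UNIV :: int set)})"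
proof (intro exI conjI allI impI)
  let ?L = "complex_of_real (ln 2)"
  show "padic_fractal_string UNIV (\<lambda>j k. k = j) Suc"
    by (fact padic_fractal_string_unit_digits)
  show "abscissa_of_convergence UNIV (\<lambda>j. ball_length (Suc j)) 0"
    by (fact abscissa_of_convergence_ball_length_Suc)
  show "(\<lambda>s. inverse (exp (s * ?L) - 1)) meromorphic_on UNIV"
    by (intro meromorphic_on_inverse analytic_on_imp_meromorphic_on analytic_intros)
  show "((\<lambda>j. complex_of_real (ball_length (Suc j)) powr s) has_sum inverse (exp (s * ?L) - 1)) UNIV"
    if "Re s > 0" for s
    using that by (rule has_sum_ball_length_Suc_powr)
  have "?L \<noteq> 0"
    by simp
  then show "{z. is_pole (\<lambda>s. inverse (exp (s * ?L) - 1)) z} =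
      {2 * pi * \<i> * of_int k / ?L | k. k \<in> (UNIV :: int set)}"
    by (simp only: is_pole_inverse_exp_mult_minus_1_iff set_eq_iff mem_Collect_eq UNIV_I simp_thms)
qed

end
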